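(* For $j\in\{0,1,2,3\}$ let $$\mathcal{F}_j(\tau)=\sum_{\Delta\ge0}c\Big(\frac{\Delta+j^2}{8},j\Big)q^{\Delta/8},$$ where $c(n,r)=0$ unless $n\in\mathbb{N}_0$, in which case $c(n,r)=\sum_{d\mid\gcd(n,r,2),\,d>0}d\,H\big(\frac{8n-r^2}{d^2}\big)$. Define $\beta_0(n),\beta_1(n)$ by $\frac{4800}{\eta(\tau)^6}\mathcal{F}_j(\tau)=\sum_{n\ge0}\beta_j(n)q^{n-\alpha_j}$ with $\alpha_0=\frac14$, $\alpha_1=\frac38$; let $\mathcal{H}_1(\tau)=\sum_{n\ge0}H(4n+3)q^{n+\frac34}$ and define $\gamma(n)$ by $\frac{4800}{\eta(\tau)^6}\mathcal{H}_1(\tau)=\sum_{n\ge0}\gamma(n)q^{n-\frac12}$; and let $p_6(n)$ be defined by $\sum_{n\ge0}p_6(n)q^n=\prod_{\ell\ge1}(1-q^\ell)^{-6}$. Then for all integers $n\ge0$, $$-\beta_0(n)\le1200\,p_6(n),\qquad \beta_1(n)\le\gamma(2n).$$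
   Context: $q=e^{2\pi i\tau}$, $\eta(\tau)=q^{1/24}\prod_{n\ge1}(1-q^n)$. For an integer $N$, $H(N)$ is the Hurwitz–Kronecker class number: $H(0)=-1/12$; $H(N)=0$ if $N<0$ or $N\equiv1,2\pmod4$; for $N>0$, $N\equiv0,3\pmod4$, $H(N)$ is the number of $\mathrm{SL}_2(\mathbb{Z})$-classes of positive definite integral binary quadratic forms of discriminant $-N$, classes of forms equivalent to a multiple of $x^2+y^2$ (resp. $x^2+xy+y^2$) weighted by $1/2$ (resp. $1/3$). $p_6(n)$ is the number of partitions of $n$ into parts of $6$ colors. *)

theory Defs
  imports "HOL-Computational_Algebra.Computational_Algebra"
begin

text \<open>Binary quadratic forms a x^2 + b x y + c y^2 as triples (a,b,c).
  Action of gamma = (p q; r s) in SL2(Z): f(x,y) maps to f(p x + q y, r x + s y).\<close>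

type_synonym qform = "int \<times> int \<times> int"

definition qform_act :: "int \<Rightarrow> int \<Rightarrow> int \<Rightarrow> int \<Rightarrow> qform \<Rightarrow> qform" where
  "qform_act p q r s f = (case f of (a, b, c) \<Rightarrow>
     (a*p^2 + b*p*r + c*r^2, 2*a*p*q + b*(p*s + q*r) + 2*c*r*s, a*q^2 + b*q*s + c*s^2))"

definition qform_equiv :: "qform \<Rightarrow> qform \<Rightarrow> bool" where
  "qform_equiv f g \<longleftrightarrow> (\<exists>p q r s. p*s - q*r = 1 \<and> g = qform_act p q r s f)"

definition posdef_forms :: "int \<Rightarrow> qform set" where
  "posdef_forms N = {(a, b, c). a > 0 \<and> b^2 - 4*a*c = -N}"

definition form_classes :: "int \<Rightarrow> qform set set" where
  "form_classes N = (\<lambda>f. {g \<in> posdef_forms N. qform_equiv f g}) ` posdef_forms N"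

definition class_weight :: "qform set \<Rightarrow> real" where
  "class_weight C =
     (if \<exists>k>0. (k, 0, k) \<in> C then 1/2
      else if \<exists>k>0. (k, k, k) \<in> C then 1/3 else 1)"

definition hurwitz :: "int \<Rightarrow> real" where
  "hurwitz N =
     (if N = 0 then -1/12
      else if N < 0 \<or> N mod 4 = 1 \<or> N mod 4 = 2 then 0
      else (\<Sum>C\<in>form_classes N. class_weight C))"

text \<open>c(n,r) = 0 unless n is a nonnegative integer; otherwise
  sum over positive d dividing gcd(n,r,2) of d * H((8n - r^2)/d^2).
  (For such d the quotient is always an integer.)\<close>
definition cc :: "rat \<Rightarrow> int \<Rightarrow> real" where
  "cc n r =
     (if n \<in> \<nat> then
        (let m = \<lfloor>n\<rfloor> in
         \<Sum>d\<in>{d::int. d > 0 \<and> d dvd gcd (gcd m r) 2}.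
            of_int d * hurwitz ((8*m - r^2) div d^2))
      else 0)"

section \<open>q-series as formal Laurent series in X = q^(1/8)\<close>

definition FF :: "int \<Rightarrow> real fls" where
  "FF j = fps_to_fls (Abs_fps (\<lambda>\<Delta>. cc ((of_nat \<Delta> + of_int (j^2)) / 8) j))"

text \<open>H_1(tau) = sum_{n >= 0} H(4n+3) q^(n + 3/4), i.e. exponent 8n+6 in X.\<close>
definition HH1 :: "real fls" where
  "HH1 = fps_to_fls (Abs_fps (\<lambda>k. if k mod 8 = 6 then hurwitz (4 * int (k div 8) + 3) else 0))"

text \<open>eta(tau)^6 = q^(1/4) prod_{n>=1} (1 - q^n)^6. The coefficient of q^n of the
  infinite product equals that of the finite product over 1..n.\<close>
definition euler6 :: "real fps" where
  "euler6 = Abs_fps (\<lambda>n. fps_nth (\<Prod>l\<in>{1..n}. (1 - fps_X ^ l) ^ 6) n)"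

definition eta6 :: "real fls" where
  "eta6 = fls_shift (-2) (fps_to_fls (Abs_fps (\<lambda>k. if 8 dvd k then fps_nth euler6 (k div 8) else 0)))"

definition beta0 :: "nat \<Rightarrow> real" where
  "beta0 n = fls_nth (4800 * inverse eta6 * FF 0) (8 * int n - 2)"

definition beta1 :: "nat \<Rightarrow> real" where
  "beta1 n = fls_nth (4800 * inverse eta6 * FF 1) (8 * int n - 3)"

definition gamma_coef :: "nat \<Rightarrow> real" where
  "gamma_coef n = fls_nth (4800 * inverse eta6 * HH1) (8 * int n - 4)"

text \<open>A 6-coloured partition of n: a multiplicity f l c for each part size l >= 1
  and colour c < 6, with sum of l * f l c equal to n.\<close>
definition p6 :: "nat \<Rightarrow> nat" where
  "p6 n = card {f :: nat \<Rightarrow> nat \<Rightarrow> nat.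
      (\<forall>l c. f l c \<noteq> 0 \<longrightarrow> 1 \<le> l \<and> l \<le> n \<and> c < 6) \<and>
      (\<Sum>l\<in>{1..n}. \<Sum>c<6. l * f l c) = n}"

end

theory Submission
  imports Defs
begin

text \<open>
  The coefficients of 1/eta^6 are, up to the shift by q^(-1/4), the numbers p6(k), which are
  nonnegative and nondecreasing in k (add parts of size 1). Multiplying out,
  beta0(n) = 4800 \<Sum>_k p6(k) c(n - k, 0), where every c(m, 0) with m > 0 is a positive combination of
  class numbers and c(0, 0) = H(0) + 2 H(0) = -1/4; hence -beta0(n) \<le> 1200 p6(n).
  Likewise beta1(n) = 4800 \<Sum>_{k<n} p6(k) H(8(n - k) - 1), and these are dominated termwise by the
  even-indexed terms p6(2k) H(8(n - k) - 1) of gamma(2n) = 4800 \<Sum>_{j<2n} p6(j) H(4(2n - 1 - j) + 3),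
  whose remaining terms are nonnegative.
\<close>

lemma sum_multiples_reindex:
  fixes h :: "nat \<Rightarrow> 'a::comm_monoid_add"
  assumes "0 < m"
  shows "(\<Sum>i=0..N. if m dvd i then h i else 0) = (\<Sum>k=0..N div m. h (m * k))"
proof -
  have "(\<Sum>i=0..N. if m dvd i then h i else 0) = (\<Sum>i\<in>{i\<in>{0..N}. m dvd i}. h i)"
    by (rule sum.inter_filter [symmetric]) simp
  also have "{i\<in>{0..N}. m dvd i} = (\<lambda>k. m * k) ` {0..N div m}"
    using assms by (auto simp: image_iff less_eq_div_iff_mult_less_eq mult.commute elim!: dvdE)
  also have "(\<Sum>i\<in>(\<lambda>k. m * k) ` {0..N div m}. h i) = (\<Sum>k=0..N div m. h (m * k))"
    using assms by (simp add: sum.reindex inj_on_def)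
  finally show ?thesis .
qed

lemma fps_compose_fps_X_power_nth:
  fixes f :: "'a::comm_ring_1 fps"
  assumes "0 < m"
  shows "(f oo fps_X ^ m) $ n = (if m dvd n then f $ (n div m) else 0)"
proof -
  have "(f oo fps_X ^ m) $ n = (\<Sum>i=0..n. if n = m * i then f $ i else 0)"
    by (simp add: fps_compose_nth power_mult [symmetric] if_distrib cong: if_cong)
  also have "\<dots> = (if m dvd n then f $ (n div m) else 0)"
  proof (cases "m dvd n")
    case True
    then have "n div m \<in> {0..n}" by (simp add: div_le_dividend)
    with True assms show ?thesis
      by (auto simp: sum.delta' dest: sym intro!: sum.cong)
  qed (auto intro!: sum.neutral)
  finally show ?thesis .
qed

lemma fps_compose_fps_X_power_mult_nth:
  fixes f g :: "'a::comm_ring_1 fps"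
  assumes "0 < m"
  shows "((f oo fps_X ^ m) * g) $ N = (\<Sum>k=0..N div m. f $ k * g $ (N - m * k))"
proof -
  have "((f oo fps_X ^ m) * g) $ N = (\<Sum>i=0..N. if m dvd i then f $ (i div m) * g $ (N - i) else 0)"
    unfolding fps_mult_nth by (rule sum.cong) (simp_all add: fps_compose_fps_X_power_nth[OF assms])
  also have "\<dots> = (\<Sum>k=0..N div m. f $ k * g $ (N - m * k))"
    using assms by (simp add: sum_multiples_reindex)
  finally show ?thesis .
qed

lemma fps_cutoff_mult: "fps_cutoff n (f * g) = fps_cutoff n (fps_cutoff n f * fps_cutoff n g)"
  by (simp add: fps_eq_iff fps_cutoff_left_mult_nth fps_cutoff_right_mult_nth)

lemma fps_cutoff_mult_eq_one:
  fixes f g :: "'a::semiring_1 fps"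
  assumes "fps_cutoff n f = 1" and "fps_cutoff n g = 1"
  shows "fps_cutoff n (f * g) = 1"
proof (cases "n = 0")
  case True
  then show ?thesis
    using assms(1) by simp
next
  case False
  then show ?thesis
    by (subst fps_cutoff_mult) (simp add: assms fps_cutoff_one)
qed

lemma fps_cutoff_prod_eq_one:
  "(\<And>x. x \<in> A \<Longrightarrow> fps_cutoff (Suc n) (f x) = 1) \<Longrightarrow> fps_cutoff (Suc n) (prod f A) = 1"
  by (induction A rule: infinite_finite_induct) (simp_all add: fps_cutoff_one fps_cutoff_mult_eq_one)

lemma fps_cutoff_power_eq_one:
  "fps_cutoff (Suc n) f = 1 \<Longrightarrow> fps_cutoff (Suc n) (f ^ k) = 1"
  by (induction k) (simp_all add: fps_cutoff_one fps_cutoff_mult_eq_one)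

lemma fps_cutoff_inverse_eq:
  fixes f g :: "'a::field fps"
  assumes f0: "f $ 0 \<noteq> 0" and eq: "fps_cutoff n f = fps_cutoff n g"
  shows "fps_cutoff n (inverse f) = fps_cutoff n (inverse g)"
proof (cases "n = 0")
  case False
  then have g0: "g $ 0 \<noteq> 0"
    using f0 eq by (metis fps_cutoff_nth gr0I)
  \<comment> \<open>the difference of the inverses is a multiple of g - f, which vanishes below degree n\<close>
  have "inverse f * (g - f) * inverse g = inverse f * (g * inverse g) - (inverse f * f) * inverse g"
    by (simp add: algebra_simps)
  also have "\<dots> = inverse f - inverse g"
    using f0 g0 by (simp add: inverse_mult_eq_1 inverse_mult_eq_1')
  finally have "inverse f - inverse g = inverse f * (g - f) * inverse g"
    by (rule sym)
  moreover have "fps_cutoff n (g - f) = 0"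
    by (simp add: fps_cutoff_diff eq)
  ultimately have "fps_cutoff n (inverse f - inverse g) = 0"
    by (metis fps_cutoff_mult fps_cutoff_zero mult_zero_right mult_zero_left)
  then show ?thesis
    by (simp add: fps_cutoff_diff)
qed simp

text \<open>Partitions of n into parts from A, the part x having size w x and multiplicity f x.\<close>

definition weighted_partitions :: "('b \<Rightarrow> nat) \<Rightarrow> 'b set \<Rightarrow> nat \<Rightarrow> ('b \<Rightarrow> nat) set" where
  "weighted_partitions w A n = {f. (\<forall>x. x \<notin> A \<longrightarrow> f x = 0) \<and> (\<Sum>x\<in>A. w x * f x) = n}"

lemma finite_weighted_partitions:
  assumes "finite A" and "\<And>x. x \<in> A \<Longrightarrow> 0 < w x"
  shows "finite (weighted_partitions w A n)"
proof (rule finite_subset)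
  show "weighted_partitions w A n \<subseteq> {f. \<forall>x. (x \<in> A \<longrightarrow> f x \<in> {0..n}) \<and> (x \<notin> A \<longrightarrow> f x = 0)}"
  proof safe
    fix f x assume f: "f \<in> weighted_partitions w A n" and x: "x \<in> A"
    have "f x \<le> w x * f x" using assms(2)[OF x] by simp
    also have "\<dots> \<le> (\<Sum>x\<in>A. w x * f x)"
      using x assms(1) by (intro member_le_sum) auto
    finally show "f x \<in> {0..n}" using f by (simp add: weighted_partitions_def)
  qed (auto simp: weighted_partitions_def)
  show "finite {f. \<forall>x. (x \<in> A \<longrightarrow> f x \<in> {0..n}) \<and> (x \<notin> A \<longrightarrow> (f x::nat) = 0)}"
    using assms(1) by (intro finite_set_of_finite_funs) auto
qed

lemma card_weighted_partitions_insert: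
  assumes F: "finite F" "\<And>x. x \<in> F \<Longrightarrow> 0 < w x" and a: "a \<notin> F" "0 < w a"
  shows "card (weighted_partitions w (insert a F) n) =
           (\<Sum>i=0..n div w a. card (weighted_partitions w F (n - w a * i)))"
proof -
  let ?S = "Sigma {0..n div w a} (\<lambda>i. weighted_partitions w F (n - w a * i))"
  have weight_upd: "(\<Sum>x\<in>insert a F. w x * (g(a := i)) x) = w a * i + (\<Sum>x\<in>F. w x * g x)" for g i
  proof -
    have "(\<Sum>x\<in>F. w x * (g(a := i)) x) = (\<Sum>x\<in>F. w x * g x)"
      using a(1) by (intro sum.cong) auto
    then show ?thesis
      using F(1) a(1) by simp
  qed
  have "bij_betw (\<lambda>(i, g). g(a := i)) ?S (weighted_partitions w (insert a F) n)"
  proof (rule bij_betw_byWitness[where f' = "\<lambda>f. (f a, f(a := 0))"])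
    show "\<forall>p\<in>?S. (\<lambda>f. (f a, f(a := 0))) ((\<lambda>(i, g). g(a := i)) p) = p"
      using a(1) by (auto simp: weighted_partitions_def fun_upd_idem)
    show "\<forall>f\<in>weighted_partitions w (insert a F) n. (\<lambda>(i, g). g(a := i)) (f a, f(a := 0)) = f"
      by simp
    show "(\<lambda>(i, g). g(a := i)) ` ?S \<subseteq> weighted_partitions w (insert a F) n"
    proof safe
      fix i g assume i: "i \<in> {0..n div w a}" and g: "g \<in> weighted_partitions w F (n - w a * i)"
      have "w a * i \<le> n"
        using i a(2) by (simp add: less_eq_div_iff_mult_less_eq mult.commute)
      then have "(\<Sum>x\<in>insert a F. w x * (g(a := i)) x) = n"
        using g by (simp only: weight_upd) (simp add: weighted_partitions_def)
      moreover have "\<forall>x. x \<notin> insert a F \<longrightarrow> (g(a := i)) x = 0"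
        using g by (simp add: weighted_partitions_def)
      ultimately show "g(a := i) \<in> weighted_partitions w (insert a F) n"
        unfolding weighted_partitions_def by blast
    qed
    show "(\<lambda>f. (f a, f(a := 0))) ` weighted_partitions w (insert a F) n \<subseteq> ?S"
    proof safe
      fix f assume f: "f \<in> weighted_partitions w (insert a F) n"
      then have n: "n = w a * f a + (\<Sum>x\<in>F. w x * f x)"
        using weight_upd[of "f" "f a"] by (simp add: weighted_partitions_def)
      then show "f a \<in> {0..n div w a}"
        using a(2) by (simp add: less_eq_div_iff_mult_less_eq mult.commute)
      show "f(a := 0) \<in> weighted_partitions w F (n - w a * f a)"
        using f n a(1) by (auto simp: weighted_partitions_def intro!: sum.cong)
    qed
  qed
  then have "card (weighted_partitions w (insert a F) n) = card ?S"
    by (simp add: bij_betw_same_card)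
  also have "\<dots> = (\<Sum>i=0..n div w a. card (weighted_partitions w F (n - w a * i)))"
    using F by (simp add: card_SigmaI finite_weighted_partitions)
  finally show ?thesis .
qed

lemma inverse_one_minus_fps_X_power:
  assumes "0 < l"
  shows "inverse (1 - fps_X ^ l :: 'a::field fps) = Abs_fps (\<lambda>_. 1) oo fps_X ^ l"
proof -
  have "1 - fps_X ^ l = (1 - fps_X :: 'a fps) oo fps_X ^ l"
    using assms by (simp add: fps_compose_sub_distrib)
  then show ?thesis
    using assms fps_inverse_compose[of "fps_X ^ l" "1 - fps_X :: 'a fps"]
    by (simp add: fps_inverse_one_minus_fps_X)
qed

lemma prod_inverse_one_minus_fps_X_power_nth:
  assumes "finite A" and "\<And>x. x \<in> A \<Longrightarrow> 0 < w x"
  shows "(\<Prod>x\<in>A. inverse (1 - fps_X ^ w x) :: 'a::field fps) $ n =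
           of_nat (card (weighted_partitions w A n))"
  using assms
proof (induction A arbitrary: n rule: finite_induct)
  case empty
  have "weighted_partitions w {} n = (if n = 0 then {\<lambda>_. 0} else {})"
    by (auto simp: weighted_partitions_def)
  then show ?case by simp
next
  case (insert a F)
  have "(\<Prod>x\<in>insert a F. inverse (1 - fps_X ^ w x) :: 'a fps) $ n =
          ((Abs_fps (\<lambda>_. 1) oo fps_X ^ w a) * (\<Prod>x\<in>F. inverse (1 - fps_X ^ w x))) $ n"
    using insert by (simp add: inverse_one_minus_fps_X_power)
  also have "\<dots> = (\<Sum>i=0..n div w a. of_nat (card (weighted_partitions w F (n - w a * i))))"
    using insert by (simp add: fps_compose_fps_X_power_mult_nth)
  also have "\<dots> = of_nat (card (weighted_partitions w (insert a F) n))"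
    using insert by (simp add: card_weighted_partitions_insert)
  finally show ?case .
qed

lemma card_weighted_partitions_mono:
  assumes "finite A" and "\<And>x. x \<in> A \<Longrightarrow> 0 < w x" and "a \<in> A"
  shows "card (weighted_partitions w A n) \<le> card (weighted_partitions w A (n + w a * m))"
proof (rule card_inj_on_le)
  show "inj_on (\<lambda>f. f(a := f a + m)) (weighted_partitions w A n)"
    by (rule inj_onI) (metis add_right_cancel fun_upd_idem_iff fun_upd_upd fun_upd_same)
  have "(\<Sum>x\<in>A. w x * (f(a := f a + m)) x) = w a * m + (\<Sum>x\<in>A. w x * f x)" for f
    using assms(1,3) by (simp add: sum.remove algebra_simps)
  then show "(\<lambda>f. f(a := f a + m)) ` weighted_partitions w A n \<subseteq> weighted_partitions w A (n + w a * m)"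
    using assms(3) by (auto simp: weighted_partitions_def)
  show "finite (weighted_partitions w A (n + w a * m))"
    using assms(1,2) by (rule finite_weighted_partitions)
qed

definition euler6_partial :: "nat \<Rightarrow> real fps" where
  "euler6_partial N = (\<Prod>l\<in>{1..N}. (1 - fps_X ^ l) ^ 6)"

lemma euler6_partial_nth_stable:
  assumes "k \<le> N"
  shows "euler6_partial N $ k = euler6_partial k $ k"
proof -
  define R where "R = (\<Prod>l\<in>{k+1..N}. (1 - fps_X ^ l :: real fps) ^ 6)"
  have "euler6_partial N = euler6_partial k * R"
    unfolding euler6_partial_def R_def using assms
    by (subst prod.union_disjoint [symmetric]) (auto intro!: prod.cong)
  moreover have "fps_cutoff (Suc k) (1 - fps_X ^ l :: real fps) = 1" if "k < l" for l
    using that by (simp add: fps_eq_iff)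
  then have "fps_cutoff (Suc k) R = 1"
    unfolding R_def by (intro fps_cutoff_prod_eq_one fps_cutoff_power_eq_one) simp
  ultimately show ?thesis
    using fps_cutoff_right_mult_nth[of k "Suc k" "euler6_partial k" R] by simp
qed

lemma fps_cutoff_euler6:
  assumes "k \<le> N"
  shows "fps_cutoff (Suc k) euler6 = fps_cutoff (Suc k) (euler6_partial N)"
proof -
  have "euler6 $ i = euler6_partial N $ i" if "i \<le> N" for i
    using euler6_partial_nth_stable[OF that] by (simp add: euler6_def euler6_partial_def)
  then show ?thesis
    using assms by (simp add: fps_eq_iff)
qed

lemma euler6_nth_0: "euler6 $ 0 = 1"
  by (simp add: euler6_def)

lemma inverse_euler6_nth:
  assumes "k \<le> N"
  shows "inverse euler6 $ k = real (card (weighted_partitions fst ({1..N} \<times> {..<6::nat}) k))"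
proof -
  have "fps_cutoff (Suc k) (inverse euler6) = fps_cutoff (Suc k) (inverse (euler6_partial N))"
    using euler6_nth_0 by (intro fps_cutoff_inverse_eq fps_cutoff_euler6 assms) simp
  then have "inverse euler6 $ k = inverse (euler6_partial N) $ k"
    by (metis fps_cutoff_nth lessI)
  also have "inverse (euler6_partial N) = (\<Prod>l\<in>{1..N}. \<Prod>c<6::nat. inverse (1 - fps_X ^ l))"
    by (simp add: euler6_partial_def inverse_prod_fps fps_inverse_power)
  also have "\<dots> = (\<Prod>x\<in>{1..N} \<times> {..<6::nat}. inverse (1 - fps_X ^ fst x))"
    unfolding prod.cartesian_product by (rule prod.cong) auto
  also have "\<dots> $ k = real (card (weighted_partitions fst ({1..N} \<times> {..<6::nat}) k))"
    by (rule prod_inverse_one_minus_fps_X_power_nth) auto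
  finally show ?thesis .
qed

lemma p6_eq_card_weighted_partitions:
  "p6 n = card (weighted_partitions fst ({1..n} \<times> {..<6::nat}) n)"
  unfolding p6_def
proof (rule bij_betw_same_card [symmetric], rule bij_betw_byWitness [where f' = case_prod])
  let ?A = "{1..n} \<times> {..<6::nat}"
  have weight: "(\<Sum>x\<in>?A. fst x * h x) = (\<Sum>l=1..n. \<Sum>c<6. l * h (l, c))" for h :: "nat \<times> nat \<Rightarrow> nat"
    by (simp add: sum.cartesian_product case_prod_beta)
  show "curry ` weighted_partitions fst ?A n \<subseteq>
          {f. (\<forall>l c. f l c \<noteq> 0 \<longrightarrow> 1 \<le> l \<and> l \<le> n \<and> c < 6) \<and> (\<Sum>l=1..n. \<Sum>c<6. l * f l c) = n}"
  proof (rule image_subsetI)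
    fix f assume f: "f \<in> weighted_partitions fst ?A n"
    then have vanish: "\<forall>x. x \<notin> ?A \<longrightarrow> f x = 0" and total: "(\<Sum>x\<in>?A. fst x * f x) = n"
      unfolding weighted_partitions_def by blast+
    have "(l, c) \<in> ?A" if "curry f l c \<noteq> 0" for l c
      using vanish that by (metis curry_conv)
    then show "curry f \<in> {f. (\<forall>l c. f l c \<noteq> 0 \<longrightarrow> 1 \<le> l \<and> l \<le> n \<and> c < 6) \<and>
                 (\<Sum>l=1..n. \<Sum>c<6. l * f l c) = n}"
      using total weight[of f] by auto
  qed
  show "case_prod ` {f. (\<forall>l c. f l c \<noteq> 0 \<longrightarrow> 1 \<le> l \<and> l \<le> n \<and> c < 6) \<and>
          (\<Sum>l=1..n. \<Sum>c<6. l * f l c) = n} \<subseteq> weighted_partitions fst ?A n"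
  proof safe
    fix g :: "nat \<Rightarrow> nat \<Rightarrow> nat"
    assume "\<forall>l c. g l c \<noteq> 0 \<longrightarrow> 1 \<le> l \<and> l \<le> n \<and> c < 6" and "(\<Sum>l=1..n. \<Sum>c<6. l * g l c) = n"
    then show "case_prod g \<in> weighted_partitions fst ?A n"
      unfolding weighted_partitions_def using weight[of "case_prod g"] by auto
  qed
qed auto

lemma inverse_euler6_nth_eq_p6: "inverse euler6 $ n = real (p6 n)"
  using inverse_euler6_nth[of n n] by (simp add: p6_eq_card_weighted_partitions)

lemma p6_mono:
  assumes "k \<le> n"
  shows "p6 k \<le> p6 n"
proof (cases "n = 0")
  case False
  \<comment> \<open>add n - k parts of size 1\<close>
  then have "card (weighted_partitions fst ({1..n} \<times> {..<6::nat}) k) \<le>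
               card (weighted_partitions fst ({1..n} \<times> {..<6::nat}) n)"
    using assms card_weighted_partitions_mono[where A = "{1..n} \<times> {..<6::nat}" and w = fst
                                                 and a = "(1, 0)" and n = k and m = "n - k"]
    by auto
  then have "inverse euler6 $ k \<le> inverse euler6 $ n"
    using inverse_euler6_nth[OF assms] inverse_euler6_nth[of n n] by simp
  then show ?thesis
    by (simp add: inverse_euler6_nth_eq_p6)
qed (use assms in simp)

lemma eta6_eq: "eta6 = fls_shift (-2) (fps_to_fls (euler6 oo fps_X ^ 8))"
proof -
  have "Abs_fps (\<lambda>k. if 8 dvd k then euler6 $ (k div 8) else 0) = euler6 oo fps_X ^ 8"
    by (simp add: fps_eq_iff fps_compose_fps_X_power_nth)
  then show ?thesis
    by (simp add: eta6_def)
qed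

lemma inverse_eta6: "inverse eta6 = fls_shift 2 (fps_to_fls (inverse euler6 oo fps_X ^ 8))"
proof (rule inverse_unique)
  have "(euler6 oo fps_X ^ 8) * (inverse euler6 oo fps_X ^ 8) = (euler6 * inverse euler6) oo fps_X ^ 8"
    by (simp add: fps_compose_mult_distrib)
  also have "\<dots> = 1"
    by (simp add: euler6_nth_0 inverse_mult_eq_1')
  finally show "eta6 * fls_shift 2 (fps_to_fls (inverse euler6 oo fps_X ^ 8)) = 1"
    unfolding eta6_eq fls_shifted_times_simps by (simp flip: fls_times_fps_to_fls)
qed

lemma eta6_quotient_eq:
  "4800 * inverse eta6 * fps_to_fls F =
     fls_shift 2 (fps_to_fls (fps_const 4800 * ((inverse euler6 oo fps_X ^ 8) * F)))"
  unfolding inverse_eta6 fls_shifted_times_simps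
  by (simp add: fls_times_fps_to_fls mult.assoc flip: numeral_fps_const)

lemma eta6_quotient_nth:
  "fls_nth (4800 * inverse eta6 * fps_to_fls F) (int N - 2) =
     4800 * (\<Sum>k=0..N div 8. real (p6 k) * F $ (N - 8 * k))"
  by (simp add: eta6_quotient_eq fps_compose_fps_X_power_mult_nth inverse_euler6_nth_eq_p6)

lemma eta6_quotient_nth_below:
  "m < -2 \<Longrightarrow> fls_nth (4800 * inverse eta6 * fps_to_fls F) m = 0"
  by (simp add: eta6_quotient_eq)

lemma hurwitz_nonneg: "0 < N \<Longrightarrow> 0 \<le> hurwitz N"
  unfolding hurwitz_def by (auto intro!: sum_nonneg simp: class_weight_def)

lemma cc_of_nat:
  "cc (of_nat m) r = (\<Sum>d\<in>{d::int. d > 0 \<and> d dvd gcd (gcd (int m) r) 2}.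
                        of_int d * hurwitz ((8 * int m - r^2) div d^2))"
  by (simp add: cc_def Let_def)

lemma cc_zero_zero: "cc 0 0 = - 1/4"
proof -
  have "{d::int. d > 0 \<and> d dvd gcd (gcd (int 0) 0) 2} = {1, 2}"
    by (auto dest: zdvd_imp_le)
  then show ?thesis
    using cc_of_nat[of 0 0] by (simp add: hurwitz_def)
qed

lemma cc_zero_nonneg:
  assumes "0 < m"
  shows "0 \<le> cc (of_nat m) 0"
  unfolding cc_of_nat
proof (rule sum_nonneg)
  fix d assume "d \<in> {d::int. d > 0 \<and> d dvd gcd (gcd (int m) 0) 2}"
  then have d: "0 < d" "d \<le> 2"
    by (auto dest: zdvd_imp_le)
  then have "d * d \<le> 2 * 2"
    by (intro mult_mono) auto
  then have "d^2 \<le> 8 * int m"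
    using assms by (simp add: power2_eq_square)
  then have "0 < (8 * int m - 0^2) div d^2"
    using d by (simp add: pos_imp_zdiv_pos_iff)
  then show "0 \<le> of_int d * hurwitz ((8 * int m - 0^2) div d^2)"
    using d hurwitz_nonneg by simp
qed

lemma cc_one: "cc (of_nat m) 1 = hurwitz (8 * int m - 1)"
proof -
  have "{d::int. d > 0 \<and> d dvd gcd (gcd (int m) 1) 2} = {1}"
    by auto
  then show ?thesis
    by (simp add: cc_of_nat)
qed

lemma beta0_eq: "beta0 n = 4800 * (\<Sum>k=0..n. real (p6 k) * cc (of_nat (n - k)) 0)"
proof -
  have "beta0 n = fls_nth (4800 * inverse eta6 * FF 0) (int (8 * n) - 2)"
    by (simp add: beta0_def)
  also have "\<dots> = 4800 * (\<Sum>k=0..n. real (p6 k) * cc (of_nat (n - k)) 0)"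
    unfolding FF_def eta6_quotient_nth
  proof (rule arg_cong[where f = "(*) 4800"], rule sum.cong)
    fix k assume "k \<in> {0..n}"
    then have "8 * n - 8 * k = 8 * (n - k)"
      by simp
    then show "real (p6 k) * Abs_fps (\<lambda>\<Delta>. cc ((of_nat \<Delta> + of_int (0^2)) / 8) 0) $ (8 * n - 8 * k) =
               real (p6 k) * cc (of_nat (n - k)) 0"
      by (simp del: of_nat_diff)
  qed simp
  finally show ?thesis .
qed

lemma beta1_Suc:
  "beta1 (Suc m) = 4800 * (\<Sum>k=0..m. real (p6 k) * hurwitz (8 * int (m - k) + 7))"
proof -
  have "beta1 (Suc m) = fls_nth (4800 * inverse eta6 * FF 1) (int (8 * m + 7) - 2)"
    by (simp add: beta1_def)
  also have "\<dots> = 4800 * (\<Sum>k=0..m. real (p6 k) * cc (of_nat (Suc (m - k))) 1)"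
    unfolding FF_def eta6_quotient_nth
  proof (rule arg_cong[where f = "(*) 4800"], rule sum.cong)
    fix k assume "k \<in> {0..m}"
    then have index: "8 * m + 7 - 8 * k = 8 * (m - k) + 7"
      by auto
    have arg: "(of_nat (8 * j + 7) + of_int (1^2)) / 8 = (of_nat (Suc j) :: rat)" for j
      by simp
    show "real (p6 k) * Abs_fps (\<lambda>\<Delta>. cc ((of_nat \<Delta> + of_int (1^2)) / 8) 1) $ (8 * m + 7 - 8 * k) =
               real (p6 k) * cc (of_nat (Suc (m - k))) 1"
      by (simp only: index arg fps_nth_Abs_fps)
  qed simp
  also have "\<dots> = 4800 * (\<Sum>k=0..m. real (p6 k) * hurwitz (8 * int (m - k) + 7))"
    unfolding cc_one by (simp add: algebra_simps)
  finally show ?thesis .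
qed

lemma gamma_coef_Suc:
  "gamma_coef (Suc m) = 4800 * (\<Sum>k=0..m. real (p6 k) * hurwitz (4 * int (m - k) + 3))"
proof -
  have "gamma_coef (Suc m) = fls_nth (4800 * inverse eta6 * HH1) (int (8 * m + 6) - 2)"
    by (simp add: gamma_coef_def)
  also have "\<dots> = 4800 * (\<Sum>k=0..m. real (p6 k) * hurwitz (4 * int (m - k) + 3))"
    unfolding HH1_def eta6_quotient_nth
  proof (rule arg_cong[where f = "(*) 4800"], rule sum.cong)
    fix k assume "k \<in> {0..m}"
    then have "8 * m + 6 - 8 * k = 8 * (m - k) + 6"
      by auto
    then show "real (p6 k) * Abs_fps (\<lambda>k. if k mod 8 = 6 then hurwitz (4 * int (k div 8) + 3) else 0)
                 $ (8 * m + 6 - 8 * k) = real (p6 k) * hurwitz (4 * int (m - k) + 3)"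
      by simp
  qed simp
  finally show ?thesis .
qed

lemma neg_beta0_le: "- beta0 n \<le> 1200 * real (p6 n)"
proof -
  have "(\<Sum>k=0..n. real (p6 k) * cc (of_nat (n - k)) 0) =
          real (p6 n) * cc 0 0 + (\<Sum>k<n. real (p6 k) * cc (of_nat (n - k)) 0)"
    by (simp add: atLeast0AtMost lessThan_Suc_atMost [symmetric])
  moreover have "0 \<le> (\<Sum>k<n. real (p6 k) * cc (of_nat (n - k)) 0)"
    by (intro sum_nonneg mult_nonneg_nonneg cc_zero_nonneg) auto
  ultimately show ?thesis
    by (simp add: beta0_eq cc_zero_zero)
qed

lemma beta1_le_gamma_coef_double: "beta1 n \<le> gamma_coef (2 * n)"
proof (cases n)
  case 0
  then show ?thesis
    by (simp add: beta1_def gamma_coef_def FF_def HH1_def eta6_quotient_nth_below)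
next
  case (Suc m)
  define h where "h j = real (p6 j) * hurwitz (4 * int (2 * m + 1 - j) + 3)" for j
  have "(\<Sum>k=0..m. real (p6 k) * hurwitz (8 * int (m - k) + 7)) \<le> (\<Sum>k=0..m. h (2 * k))"
  proof (rule sum_mono)
    fix k assume "k \<in> {0..m}"
    then have "4 * int (2 * m + 1 - 2 * k) + 3 = 8 * int (m - k) + 7"
      by (simp add: of_nat_diff)
    then have "h (2 * k) = real (p6 (2 * k)) * hurwitz (8 * int (m - k) + 7)"
      by (simp only: h_def)
    then show "real (p6 k) * hurwitz (8 * int (m - k) + 7) \<le> h (2 * k)"
      by (simp add: mult_right_mono hurwitz_nonneg p6_mono)
  qed
  also have "\<dots> = (\<Sum>j\<in>(*) 2 ` {0..m}. h j)"
    by (subst sum.reindex) (auto simp: inj_on_def)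
  also have "\<dots> \<le> (\<Sum>j=0..2 * m + 1. h j)"
    by (rule sum_mono2) (auto simp: h_def hurwitz_nonneg)
  finally show ?thesis
    by (simp add: Suc beta1_Suc gamma_coef_Suc h_def)
qed

theorem lemma5p2:
  fixes n :: nat
  shows "- beta0 n \<le> 1200 * real (p6 n) \<and> beta1 n \<le> gamma_coef (2 * n)"
  using neg_beta0_le beta1_le_gamma_coef_double by blast

end
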